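(* Let $\mathbb{C}$ be a locally small category and $\mathbb{C}_{\mathit{fin}}$ a full subcategory satisfying (C1)–(C5) below. Let $\mathbb{A}$ be a full subcategory of $\mathbb{C}_{\mathit{fin}}$, let $F\in\mathrm{Ob}(\mathbb{C})$ be universal and locally finite for $\mathbb{A}$, and let $A\in\mathrm{Ob}(\mathbb{A})$ and $t\ge2$ be arbitrary. Assume that for every $B\in\mathrm{Ob}(\mathbb{A})$ with $A\to B$ there is a coloring $\lambda_B:\hom(A,B)\to\{0,\dots,t-1\}$ essential at $B$. Then there exists an essential coloring $\gamma:\hom(A,F)\to\{0,\dots,t-1\}$.
   Context: Write $A\to B$ if $\hom(A,B)\ne\varnothing$. Conditions: (C1) all morphisms of $\mathbb{C}$ are monomorphisms; (C2) $\mathrm{Ob}(\mathbb{C}_{\mathit{fin}})$ is a set; (C3) $\hom(A,B)$ is finite for $A,B\in\mathrm{Ob}(\mathbb{C}_{\mathit{fin}})$; (C4) for every $F\in\mathrm{Ob}(\mathbb{C})$ there is $A\in\mathrm{Ob}(\mathbb{C}_{\mathit{fin}})$ with $A\to F$; (C5) for every $B\in\mathrm{Ob}(\mathbb{C}_{\mathit{fin}})$ the set $\{A\in\mathrm{Ob}(\mathbb{C}_{\mathit{fin}}):A\to B\}$ is finite. $F$ is universal for $\mathbb{A}$ if $A\to F$ for all $A\in\mathrm{Ob}(\mathbb{A})$. $F$ is locally finite for $\mathbb{A}$ if for all $A,B\in\mathrm{Ob}(\mathbb{A})$, $e\in\hom(A,F)$, $f\in\hom(B,F)$ there exist $D\in\mathrm{Ob}(\mathbb{A})$,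 $r\in\hom(D,F)$, $p\in\hom(A,D)$, $q\in\hom(B,D)$ with $r\cdot p=e$, $r\cdot q=f$, such that for every $H\in\mathrm{Ob}(\mathbb{C})$, $r'\in\hom(H,F)$, $p'\in\hom(A,H)$, $q'\in\hom(B,H)$ with $r'\cdot p'=e$, $r'\cdot q'=f$ there is $s\in\hom(D,H)$ with $r'\cdot s=r$, $s\cdot p=p'$, $s\cdot q=q'$. For $\chi:\hom(A,F)\to\{0,\dots,k-1\}$ and $w\in\hom(B,F)$, $\chi^{(w)}(f)=\chi(w\cdot f)$ for $f\in\hom(A,B)$; $\ker g=\{(x,y):g(x)=g(y)\}$. A coloring $\lambda:\hom(A,B)\to\{0,\dots,t-1\}$ is essential at $B$ if for every $k\ge2$ and every $\chi:\hom(A,F)\to\{0,\dots,k-1\}$ there is $w\in\hom(B,F)$ with $\ker\lambda\subseteq\ker\chi^{(w)}$. A coloring $\gamma:\hom(A,F)\to\{0,\dots,t-1\}$ is essential if for every $B\in\mathrm{Ob}(\mathbb{A})$ with $A\to B$ and every $w\in\hom(B,F)$ the coloring $\gamma^{(w)}$ is essential at $B$. *)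

theory Defs
  imports Main
begin

definition category ::
  "'o set \<Rightarrow> ('o \<Rightarrow> 'o \<Rightarrow> 'm set) \<Rightarrow> ('m \<Rightarrow> 'm \<Rightarrow> 'm) \<Rightarrow> ('o \<Rightarrow> 'm) \<Rightarrow> bool" where
  "category Ob hom cmp idm \<longleftrightarrow>
     (\<forall>a\<in>Ob. \<forall>b\<in>Ob. \<forall>c\<in>Ob. \<forall>f\<in>hom a b. \<forall>g\<in>hom b c. cmp g f \<in> hom a c) \<and>
     (\<forall>a\<in>Ob. \<forall>b\<in>Ob. \<forall>c\<in>Ob. \<forall>d\<in>Ob. \<forall>f\<in>hom a b. \<forall>g\<in>hom b c. \<forall>h\<in>hom c d.
         cmp h (cmp g f) = cmp (cmp h g) f) \<and>
     (\<forall>a\<in>Ob. idm a \<in> hom a a) \<and>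
     (\<forall>a\<in>Ob. \<forall>b\<in>Ob. \<forall>f\<in>hom a b. cmp (idm b) f = f \<and> cmp f (idm a) = f) \<and>
     (\<forall>a\<in>Ob. \<forall>b\<in>Ob. \<forall>a'\<in>Ob. \<forall>b'\<in>Ob. hom a b \<inter> hom a' b' \<noteq> {} \<longrightarrow> a = a' \<and> b = b')"

definition all_mono ::
  "'o set \<Rightarrow> ('o \<Rightarrow> 'o \<Rightarrow> 'm set) \<Rightarrow> ('m \<Rightarrow> 'm \<Rightarrow> 'm) \<Rightarrow> bool" where
  "all_mono Ob hom cmp \<longleftrightarrow>
     (\<forall>x\<in>Ob. \<forall>y\<in>Ob. \<forall>z\<in>Ob. \<forall>f\<in>hom y z. \<forall>g\<in>hom x y. \<forall>h\<in>hom x y.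
        cmp f g = cmp f h \<longrightarrow> g = h)"

text \<open>Conditions (C1)--(C5) for the full subcategory with object set Cfin.
  (C2) is automatic in HOL (Cfin is a set).\<close>
definition conditions_C ::
  "'o set \<Rightarrow> ('o \<Rightarrow> 'o \<Rightarrow> 'm set) \<Rightarrow> ('m \<Rightarrow> 'm \<Rightarrow> 'm) \<Rightarrow> 'o set \<Rightarrow> bool" where
  "conditions_C Ob hom cmp Cfin \<longleftrightarrow>
     all_mono Ob hom cmp \<and>
     (\<forall>a\<in>Cfin. \<forall>b\<in>Cfin. finite (hom a b)) \<and>
     (\<forall>F\<in>Ob. \<exists>a\<in>Cfin. hom a F \<noteq> {}) \<and>
     (\<forall>b\<in>Cfin. finite {a\<in>Cfin. hom a b \<noteq> {}})"

definition universal_for :: "('o \<Rightarrow> 'o \<Rightarrow> 'm set) \<Rightarrow> 'o set \<Rightarrow> 'o \<Rightarrow> bool" where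
  "universal_for hom AA F \<longleftrightarrow> (\<forall>a\<in>AA. hom a F \<noteq> {})"

definition locally_finite_for ::
  "'o set \<Rightarrow> ('o \<Rightarrow> 'o \<Rightarrow> 'm set) \<Rightarrow> ('m \<Rightarrow> 'm \<Rightarrow> 'm) \<Rightarrow> 'o set \<Rightarrow> 'o \<Rightarrow> bool" where
  "locally_finite_for Ob hom cmp AA F \<longleftrightarrow>
     (\<forall>a\<in>AA. \<forall>b\<in>AA. \<forall>e\<in>hom a F. \<forall>f\<in>hom b F.
        (\<exists>d\<in>AA. \<exists>r\<in>hom d F. \<exists>p\<in>hom a d. \<exists>q\<in>hom b d.
            cmp r p = e \<and> cmp r q = f \<and>
            (\<forall>h\<in>Ob. \<forall>r'\<in>hom h F. \<forall>p'\<in>hom a h. \<forall>q'\<in>hom b h.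
               cmp r' p' = e \<and> cmp r' q' = f \<longrightarrow>
               (\<exists>s\<in>hom d h. cmp r' s = r \<and> cmp s p = p' \<and> cmp s q = q'))))"

definition essential_at ::
  "('o \<Rightarrow> 'o \<Rightarrow> 'm set) \<Rightarrow> ('m \<Rightarrow> 'm \<Rightarrow> 'm) \<Rightarrow> 'o \<Rightarrow> 'o \<Rightarrow> 'o \<Rightarrow> ('m \<Rightarrow> nat) \<Rightarrow> bool" where
  "essential_at hom cmp F A B lam \<longleftrightarrow>
     (\<forall>k::nat. k \<ge> 2 \<longrightarrow> (\<forall>chi :: 'm \<Rightarrow> nat. chi ` hom A F \<subseteq> {..<k} \<longrightarrow>
        (\<exists>w\<in>hom B F. \<forall>f\<in>hom A B. \<forall>g\<in>hom A B.
            lam f = lam g \<longrightarrow> chi (cmp w f) = chi (cmp w g))))"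

definition essential ::
  "('o \<Rightarrow> 'o \<Rightarrow> 'm set) \<Rightarrow> ('m \<Rightarrow> 'm \<Rightarrow> 'm) \<Rightarrow> 'o set \<Rightarrow> 'o \<Rightarrow> 'o \<Rightarrow> ('m \<Rightarrow> nat) \<Rightarrow> bool" where
  "essential hom cmp AA F A gam \<longleftrightarrow>
     (\<forall>B\<in>AA. hom A B \<noteq> {} \<longrightarrow>
        (\<forall>w\<in>hom B F. essential_at hom cmp F A B (\<lambda>f. gam (cmp w f))))"

end

theory Submission
  imports Defs "HOL-Analysis.Function_Topology"
begin

text \<open>The colorings of hom(A,F) with t colors form the product space {..<t}^hom(A,F), which
  is compact by Tychonoff. For each B and w : B \<rightarrow> F the colorings gamma with gamma^(w)
  essential at B form a closed set, because membership only depends on the finitely many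
  values of gamma on w \<circ> hom(A,B). By local finiteness finitely many arrows w_i : B_i \<rightarrow> F
  factor as w_i = r \<circ> p_i through a single r : D \<rightarrow> F with D in AA; since r is mono, an
  essential coloring of hom(A,D) transports along r to a coloring of hom(A,F), whose
  restriction along each w_i is essential at B_i. So the closed sets have the finite
  intersection property, and any point of their intersection is an essential coloring.\<close>

lemma category_comp:
  assumes "category Ob hom cmp idm" "a \<in> Ob" "b \<in> Ob" "c \<in> Ob" "f \<in> hom a b" "g \<in> hom b c"
  shows "cmp g f \<in> hom a c"
  using assms unfolding category_def by blast

lemma category_assoc:
  assumes "category Ob hom cmp idm" "a \<in> Ob" "b \<in> Ob" "c \<in> Ob" "d \<in> Ob"
    "f \<in> hom a b" "g \<in> hom b c" "h \<in> hom c d"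
  shows "cmp h (cmp g f) = cmp (cmp h g) f"
  using assms unfolding category_def by blast

lemma category_id:
  assumes "category Ob hom cmp idm" "a \<in> Ob"
  shows "idm a \<in> hom a a"
  using assms unfolding category_def by blast

lemma category_id_right:
  assumes "category Ob hom cmp idm" "a \<in> Ob" "b \<in> Ob" "f \<in> hom a b"
  shows "cmp f (idm a) = f"
  using assms unfolding category_def by blast

lemma all_mono_inj_on:
  assumes "all_mono Ob hom cmp" "x \<in> Ob" "y \<in> Ob" "z \<in> Ob" "f \<in> hom y z"
  shows "inj_on (cmp f) (hom x y)"
  using assms unfolding all_mono_def inj_on_def by blast

lemma locally_finite_forE:
  assumes "locally_finite_for Ob hom cmp AA F" "a \<in> AA" "b \<in> AA" "e \<in> hom a F" "f \<in> hom b F"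
  obtains d r p q where "d \<in> AA" "r \<in> hom d F" "p \<in> hom a d" "q \<in> hom b d"
    "cmp r p = e" "cmp r q = f"
  using assms unfolding locally_finite_for_def by metis

lemma locally_finite_joint_factorization:
  assumes cat: "category Ob hom cmp idm" and AA: "AA \<subseteq> Ob" and F: "F \<in> Ob"
    and lf: "locally_finite_for Ob hom cmp AA F"
    and "finite P" "P \<noteq> {}" "\<forall>(B, w)\<in>P. B \<in> AA \<and> w \<in> hom B F"
  shows "\<exists>D\<in>AA. \<exists>r\<in>hom D F. \<forall>(B, w)\<in>P. \<exists>p\<in>hom B D. cmp r p = w"
  using assms(5-)
proof (induction P rule: finite_ne_induct)
  case (singleton x)
  obtain B w where x: "x = (B, w)" "B \<in> AA" "w \<in> hom B F"
    using singleton by (cases x) auto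
  then have "idm B \<in> hom B B" "cmp w (idm B) = w"
    using category_id[OF cat] category_id_right[OF cat] AA F by auto
  then show ?case
    using x by blast
next
  case (insert x P)
  obtain B w where x: "x = (B, w)" "B \<in> AA" "w \<in> hom B F"
    using insert.prems by (cases x) auto
  obtain D r where D: "D \<in> AA" "r \<in> hom D F" and fac: "\<forall>(B', w')\<in>P. \<exists>p\<in>hom B' D. cmp r p = w'"
    using insert by auto
  obtain d r' p q where d: "d \<in> AA" "r' \<in> hom d F" "p \<in> hom D d" "q \<in> hom B d"
    and r': "cmp r' p = r" "cmp r' q = w"
    using locally_finite_forE[OF lf D(1) x(2) D(2) x(3)] .
  have "\<exists>p'\<in>hom B' d. cmp r' p' = w'" if "(B', w') \<in> P" for B' w'
  proof -
    obtain p'' where p'': "p'' \<in> hom B' D" "cmp r p'' = w'"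
      using fac \<open>(B', w') \<in> P\<close> by fastforce
    have "B' \<in> Ob"
      using insert.prems \<open>(B', w') \<in> P\<close> AA by auto
    then have "cmp p p'' \<in> hom B' d" "cmp r' (cmp p p'') = w'"
      using category_comp[OF cat _ _ _ p''(1) d(3)] category_assoc[OF cat _ _ _ _ p''(1) d(3,2)]
        AA F D d p''(2) r'(1) by auto
    then show ?thesis
      by blast
  qed
  moreover have "\<exists>p'\<in>hom B d. cmp r' p' = w"
    using d(4) r'(2) by blast
  ultimately have "\<forall>(B', w')\<in>insert x P. \<exists>p'\<in>hom B' d. cmp r' p' = w'"
    using x(1) by auto
  then show ?case
    using d(1,2) by blast
qed

lemma extend_along_inj_on:
  assumes "inj_on h S" "h ` S \<subseteq> I" "lam ` S \<subseteq> K" "k \<in> K"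
  shows "\<exists>g\<in>PiE I (\<lambda>_. K). \<forall>x\<in>S. g (h x) = lam x"
proof
  define g where "g = restrict (\<lambda>y. if y \<in> h ` S then lam (inv_into S h y) else k) I"
  show "g \<in> PiE I (\<lambda>_. K)"
    using assms inv_into_into[of _ h S] unfolding g_def by (auto simp: inv_into_f_f image_subset_iff)
  show "\<forall>x\<in>S. g (h x) = lam x"
    using assms(1,2) unfolding g_def by auto
qed

lemma essential_at_cong:
  assumes "\<forall>f\<in>hom A B. lam f = lam' f"
  shows "essential_at hom cmp F A B lam = essential_at hom cmp F A B lam'"
  using assms unfolding essential_at_def by (metis (no_types, lifting))

lemma essential_at_postcomp_finitely_determined:
  assumes "finite (hom A B)"
  shows "\<exists>J. finite J \<and> (\<forall>g h. (\<forall>j\<in>J. g j = h j) \<longrightarrow>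
    essential_at hom cmp F A B (\<lambda>f. g (cmp w f)) = essential_at hom cmp F A B (\<lambda>f. h (cmp w f)))"
proof (intro exI conjI allI impI)
  show "finite (cmp w ` hom A B)"
    using assms by simp
  fix g h :: "_ \<Rightarrow> nat"
  assume "\<forall>j\<in>cmp w ` hom A B. g j = h j"
  then show "essential_at hom cmp F A B (\<lambda>f. g (cmp w f)) = essential_at hom cmp F A B (\<lambda>f. h (cmp w f))"
    by (intro essential_at_cong) auto
qed

lemma essential_at_precomp:
  assumes cat: "category Ob hom cmp idm" and ob: "A \<in> Ob" "B \<in> Ob" "D \<in> Ob" "F \<in> Ob"
    and p: "p \<in> hom B D" and ess: "essential_at hom cmp F A D lam"
  shows "essential_at hom cmp F A B (\<lambda>f. lam (cmp p f))"
  unfolding essential_at_def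
proof (intro allI impI)
  fix k :: nat and chi :: "'b \<Rightarrow> nat"
  assume "2 \<le> k" "chi ` hom A F \<subseteq> {..<k}"
  then obtain w where w: "w \<in> hom D F"
    and wk: "\<forall>f\<in>hom A D. \<forall>g\<in>hom A D. lam f = lam g \<longrightarrow> chi (cmp w f) = chi (cmp w g)"
    using ess unfolding essential_at_def by blast
  have "chi (cmp (cmp w p) f) = chi (cmp (cmp w p) g)"
    if "f \<in> hom A B" "g \<in> hom A B" "lam (cmp p f) = lam (cmp p g)" for f g
    using that wk category_comp[OF cat ob(1-3) _ p] category_assoc[OF cat ob _ p w] by metis
  moreover have "cmp w p \<in> hom B F"
    using category_comp[OF cat ob(2-4) p w] .
  ultimately show "\<exists>w\<in>hom B F. \<forall>f\<in>hom A B. \<forall>g\<in>hom A B.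
      lam (cmp p f) = lam (cmp p g) \<longrightarrow> chi (cmp w f) = chi (cmp w g)"
    by blast
qed

lemma openin_product_discrete_finitely_determined:
  assumes "finite J" and det: "\<And>g h. \<forall>j\<in>J. g j = h j \<Longrightarrow> Q g \<Longrightarrow> Q h"
  shows "openin (product_topology (\<lambda>_. discrete_topology K) I) {g \<in> PiE I (\<lambda>_. K). Q g}"
proof -
  define S where "S = {g \<in> PiE I (\<lambda>_. K). Q g}"
  define V where "V g = PiE I (\<lambda>i. if i \<in> J then {g i} else K)" for g
  have V_open: "openin (product_topology (\<lambda>_. discrete_topology K) I) (V g)" if "g \<in> S" for g
  proof -
    have "{i \<in> I. (if i \<in> J then {g i} else K) \<noteq> K} \<subseteq> J"
      by auto
    then have "finite {i \<in> I. (if i \<in> J then {g i} else K) \<noteq> topspace (discrete_topology K)}"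
      using \<open>finite J\<close> finite_subset by auto
    moreover have "\<forall>i\<in>I. openin (discrete_topology K) (if i \<in> J then {g i} else K)"
      using that unfolding S_def by (simp add: PiE_iff)
    ultimately show ?thesis
      unfolding V_def openin_PiE_gen by blast
  qed
  have V_sub: "V g \<subseteq> S" if "g \<in> S" for g
  proof
    fix h assume h: "h \<in> V g"
    have g: "g \<in> PiE I (\<lambda>_. K)" "Q g"
      using that unfolding S_def by auto
    have "g j = h j" if "j \<in> J" for j
    proof (cases "j \<in> I")
      case True
      then show ?thesis
        using PiE_mem[OF h[unfolded V_def] True] that by simp
    next
      case False
      then show ?thesis
        using PiE_arb[OF g(1) False] PiE_arb[OF h[unfolded V_def] False] by simp
    qed
    moreover have "V g \<subseteq> PiE I (\<lambda>_. K)"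
      unfolding V_def using g(1) by (intro PiE_mono) (auto simp: PiE_iff)
    ultimately show "h \<in> S"
      using g(2) h det unfolding S_def by blast
  qed
  have self_in_V: "g \<in> V g" if "g \<in> S" for g
    using that unfolding S_def V_def by (simp add: PiE_iff)
  have "S = \<Union>(V ` S)"
    using V_sub self_in_V by blast
  moreover have "openin (product_topology (\<lambda>_. discrete_topology K) I) (\<Union>(V ` S))"
    using V_open by (intro openin_Union) blast
  ultimately show ?thesis
    unfolding S_def by simp
qed

lemma closedin_product_discrete_finitely_determined:
  assumes "finite J" and det: "\<And>g h. \<forall>j\<in>J. g j = h j \<Longrightarrow> Q g = Q h"
  shows "closedin (product_topology (\<lambda>_. discrete_topology K) I) {g \<in> PiE I (\<lambda>_. K). Q g}"
proof -
  have "openin (product_topology (\<lambda>_. discrete_topology K) I) {g \<in> PiE I (\<lambda>_. K). \<not> Q g}"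
    by (rule openin_product_discrete_finitely_determined[OF \<open>finite J\<close>]) (use det in blast)
  moreover have "{g \<in> PiE I (\<lambda>_. K). \<not> Q g} = PiE I (\<lambda>_. K) - {g \<in> PiE I (\<lambda>_. K). Q g}"
    by blast
  ultimately show ?thesis
    unfolding closedin_def by auto
qed

lemma finitely_determined_constraints_satisfiable:
  fixes Q :: "'x \<Rightarrow> ('i \<Rightarrow> 'k) \<Rightarrow> bool"
  assumes "finite K"
    and det: "\<And>x. x \<in> X \<Longrightarrow> \<exists>J. finite J \<and> (\<forall>g h. (\<forall>j\<in>J. g j = h j) \<longrightarrow> Q x g = Q x h)"
    and sat: "\<And>Y. finite Y \<Longrightarrow> Y \<subseteq> X \<Longrightarrow> \<exists>g\<in>PiE I (\<lambda>_. K). \<forall>x\<in>Y. Q x g"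
  shows "\<exists>g\<in>PiE I (\<lambda>_. K). \<forall>x\<in>X. Q x g"
proof -
  define T where "T = product_topology (\<lambda>_. discrete_topology K) I"
  define S where "S x = {g \<in> PiE I (\<lambda>_. K). Q x g}" for x
  define \<U> where "\<U> = insert (PiE I (\<lambda>_. K)) (S ` X)"
  have compact: "compact_space T"
    unfolding T_def using \<open>finite K\<close>
    by (simp add: compact_space_product_topology compact_space_discrete_topology)
  have closed: "\<forall>C\<in>\<U>. closedin T C"
  proof -
    have "closedin T (S x)" if x: "x \<in> X" for x
    proof -
      obtain J where "finite J" "\<forall>g h. (\<forall>j\<in>J. g j = h j) \<longrightarrow> Q x g = Q x h"
        using det[OF x] by blast
      then show ?thesis
        unfolding S_def T_def by (intro closedin_product_discrete_finitely_determined) blast+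
    qed
    moreover have "closedin T (PiE I (\<lambda>_. K))"
      using closedin_topspace[of T] unfolding T_def by simp
    ultimately show ?thesis
      unfolding \<U>_def by auto
  qed
  have fip: "\<Inter>\<F> \<noteq> {}" if "finite \<F>" "\<F> \<subseteq> \<U>" for \<F>
  proof -
    have "finite (\<F> - {PiE I (\<lambda>_. K)})" "\<F> - {PiE I (\<lambda>_. K)} \<subseteq> S ` X"
      using that unfolding \<U>_def by auto
    then obtain Y where Y: "Y \<subseteq> X" "finite Y" "\<F> - {PiE I (\<lambda>_. K)} = S ` Y"
      using finite_subset_image by metis
    obtain g where g: "g \<in> PiE I (\<lambda>_. K)" "\<forall>x\<in>Y. Q x g"
      using sat[OF Y(2,1)] by blast
    have "g \<in> C" if "C \<in> \<F>" for C
    proof (cases "C = PiE I (\<lambda>_. K)")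
      case False
      then have "C \<in> S ` Y"
        using that Y(3) by (metis Diff_iff singletonD)
      then obtain x where "x \<in> Y" "C = S x"
        by blast
      then show ?thesis
        using g unfolding S_def by simp
    qed (use g in simp)
    then show ?thesis
      by blast
  qed
  have "\<Inter>\<U> \<noteq> {}"
    using compact closed fip unfolding compact_space_fip by simp
  then obtain g where "g \<in> \<Inter>\<U>"
    by blast
  then have "g \<in> PiE I (\<lambda>_. K)" "\<forall>x\<in>X. g \<in> S x"
    unfolding \<U>_def by auto
  then show ?thesis
    unfolding S_def by blast
qed

lemma finitely_many_essential_restrictions:
  assumes cat: "category Ob hom cmp idm" and AA: "AA \<subseteq> Ob" and F: "F \<in> Ob"
    and mono: "all_mono Ob hom cmp" and lf: "locally_finite_for Ob hom cmp AA F"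
    and A: "A \<in> AA" and e: "e \<in> hom A F" and "t > 0"
    and colorings: "\<forall>B\<in>AA. hom A B \<noteq> {} \<longrightarrow>
      (\<exists>lam :: 'm \<Rightarrow> nat. lam ` hom A B \<subseteq> {..<t} \<and> essential_at hom cmp F A B lam)"
    and "finite Y" and Y: "\<forall>(B, w)\<in>Y. B \<in> AA \<and> w \<in> hom B F"
  shows "\<exists>g\<in>PiE (hom A F) (\<lambda>_. {..<t}).
    \<forall>(B, w)\<in>Y. essential_at hom cmp F A B (\<lambda>f. g (cmp w f))"
proof -
  have AeY: "finite (insert (A, e) Y)" "insert (A, e) Y \<noteq> {}"
    "\<forall>(B, w)\<in>insert (A, e) Y. B \<in> AA \<and> w \<in> hom B F"
    using \<open>finite Y\<close> Y A e by auto
  obtain D r where D: "D \<in> AA" "r \<in> hom D F"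
    and fac: "\<forall>(B, w)\<in>insert (A, e) Y. \<exists>p\<in>hom B D. cmp r p = w"
    using locally_finite_joint_factorization[OF cat AA F lf AeY] by blast
  have ob: "A \<in> Ob" "D \<in> Ob"
    using A D AA by auto
  have "hom A D \<noteq> {}"
    using fac by auto
  then obtain lam where lam: "lam ` hom A D \<subseteq> {..<t}" "essential_at hom cmp F A D lam"
    using colorings D(1) by blast
  have "inj_on (cmp r) (hom A D)" "cmp r ` hom A D \<subseteq> hom A F"
    using all_mono_inj_on[OF mono ob F D(2)] category_comp[OF cat ob F _ D(2)] by auto
  then obtain g where g: "g \<in> PiE (hom A F) (\<lambda>_. {..<t})"
    and g_lam: "\<forall>f\<in>hom A D. g (cmp r f) = lam f"
    using extend_along_inj_on[OF _ _ lam(1), of "cmp r" "hom A F" 0] \<open>t > 0\<close> by auto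
  have "essential_at hom cmp F A B (\<lambda>f. g (cmp w f))" if Bw: "(B, w) \<in> Y" for B w
  proof -
    obtain p where p: "p \<in> hom B D" "cmp r p = w"
      using fac Bw by fastforce
    have B: "B \<in> Ob"
      using Y Bw AA by auto
    have "g (cmp w f) = lam (cmp p f)" if f: "f \<in> hom A B" for f
    proof -
      have "cmp w f = cmp r (cmp p f)"
        using category_assoc[OF cat ob(1) B ob(2) F f p(1) D(2)] p(2) by simp
      then show ?thesis
        using g_lam category_comp[OF cat ob(1) B ob(2) f p(1)] by simp
    qed
    then show ?thesis
      using essential_at_precomp[OF cat ob(1) B ob(2) F p(1) lam(2)]
        essential_at_cong[of hom A B "\<lambda>f. g (cmp w f)" "\<lambda>f. lam (cmp p f)"] by simp
  qed
  then show ?thesis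
    using g by blast
qed

theorem lemma3p5:
  fixes Ob :: "'o set" and hom :: "'o \<Rightarrow> 'o \<Rightarrow> 'm set"
    and cmp :: "'m \<Rightarrow> 'm \<Rightarrow> 'm" and idm :: "'o \<Rightarrow> 'm"
    and Cfin AA :: "'o set" and F A :: 'o and t :: nat
  assumes "category Ob hom cmp idm"
    and "Cfin \<subseteq> Ob"
    and "conditions_C Ob hom cmp Cfin"
    and "AA \<subseteq> Cfin"
    and "F \<in> Ob"
    and "universal_for hom AA F"
    and "locally_finite_for Ob hom cmp AA F"
    and "A \<in> AA"
    and "t \<ge> 2"
    and "\<forall>B\<in>AA. hom A B \<noteq> {} \<longrightarrow>
           (\<exists>lam :: 'm \<Rightarrow> nat. lam ` hom A B \<subseteq> {..<t} \<and> essential_at hom cmp F A B lam)"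
  shows "\<exists>gam :: 'm \<Rightarrow> nat. gam ` hom A F \<subseteq> {..<t} \<and> essential hom cmp AA F A gam"
proof -
  have AA: "AA \<subseteq> Ob"
    using assms(2,4) by blast
  have mono: "all_mono Ob hom cmp" and fin_hom: "\<forall>a\<in>Cfin. \<forall>b\<in>Cfin. finite (hom a b)"
    using assms(3) unfolding conditions_C_def by auto
  obtain e where e: "e \<in> hom A F"
    using assms(6,8) unfolding universal_for_def by blast
  define Pairs where "Pairs = {(B, w). B \<in> AA \<and> hom A B \<noteq> {} \<and> w \<in> hom B F}"
  define ess where "ess = (\<lambda>(B, w) (g :: 'm \<Rightarrow> nat). essential_at hom cmp F A B (\<lambda>f. g (cmp w f)))"
  have "\<exists>g\<in>PiE (hom A F) (\<lambda>_. {..<t}). \<forall>x\<in>Pairs. ess x g"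
  proof (rule finitely_determined_constraints_satisfiable)
    fix x assume "x \<in> Pairs"
    then obtain B w where x: "x = (B, w)" "B \<in> AA"
      unfolding Pairs_def by blast
    then have "finite (hom A B)"
      using fin_hom assms(4,8) by blast
    then show "\<exists>J. finite J \<and> (\<forall>g h. (\<forall>j\<in>J. g j = h j) \<longrightarrow> ess x g = ess x h)"
      unfolding ess_def x(1) prod.case by (rule essential_at_postcomp_finitely_determined)
  next
    fix Y assume "finite Y" "Y \<subseteq> Pairs"
    moreover have "\<forall>(B, w)\<in>Y. B \<in> AA \<and> w \<in> hom B F"
      using \<open>Y \<subseteq> Pairs\<close> unfolding Pairs_def by auto
    ultimately show "\<exists>g\<in>PiE (hom A F) (\<lambda>_. {..<t}). \<forall>x\<in>Y. ess x g"
      using finitely_many_essential_restrictions[OF assms(1) AA assms(5) mono assms(7,8) e _ assms(10)]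
        assms(9) unfolding ess_def by (simp add: case_prod_unfold)
  qed simp
  then obtain g where "g \<in> PiE (hom A F) (\<lambda>_. {..<t})" "\<forall>x\<in>Pairs. ess x g"
    by blast
  then show ?thesis
    unfolding essential_def Pairs_def ess_def by (intro exI[of _ g] conjI) auto
qed

end
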